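(* Let $\vec X=(X_1,\ldots,X_t)\in(\mathcal{H}_m^{\otimes n})^t$ satisfy $\sum_{i=1}^tX_i=\mathrm{id}$, and let $\mathcal{R}(\vec X)=\arg\min\{\|\vec X-\vec P\|'^2_2:\vec P\text{ is a sub-POVM}\}$. Then $$\|\mathcal{R}(\vec X)-\vec X\|'^2_2\le\frac{3(t+1)}{m^n}\sum_{i=1}^t\mathrm{Tr}\,\zeta(X_i)+6\Big(\frac{t}{m^n}\sum_{i=1}^t\mathrm{Tr}\,\zeta(X_i)\Big)^{1/2}.$$
   Context: $\mathcal{H}_m^{\otimes n}$ denotes Hermitian operators on $(\mathbb{C}^m)^{\otimes n}$. A sub-POVM is a tuple $(P_1,\ldots,P_t)$ of positive semidefinite operators with $\sum_iP_i\le\mathrm{id}$. For tuples, $\|\vec Y\|'^2_2=\sum_{i=1}^t\frac1{m^n}\mathrm{Tr}Y_i^\dagger Y_i$. $\zeta:\mathbb{R}\to\mathbb{R}$ is $\zeta(x)=x^2$ for $x\le0$ and $0$ otherwise, applied to Hermitian matrices through the spectral decomposition. *)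

theory Defs
  imports "HOL-Analysis.Analysis" "Jordan_Normal_Form.Schur_Decomposition"
begin

text \<open>Operators on (C^m)^{\<otimes>n} are represented as complex d x d matrices, d = m^n.
  A t-tuple of operators is a function nat => complex mat, indices i < t.\<close>

definition mtrace :: "complex mat \<Rightarrow> complex" where
  "mtrace A = (\<Sum>i<dim_row A. A $$ (i,i))"

definition hermitian_mat :: "nat \<Rightarrow> complex mat \<Rightarrow> bool" where
  "hermitian_mat d A \<longleftrightarrow> A \<in> carrier_mat d d \<and> mat_adjoint A = A"

definition psd_mat :: "nat \<Rightarrow> complex mat \<Rightarrow> bool" where
  "psd_mat d A \<longleftrightarrow> hermitian_mat d A \<and>
     (\<forall>v \<in> carrier_vec d. 0 \<le> Re (conjugate v \<bullet> (A *\<^sub>v v)))"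

definition unitary_mat :: "nat \<Rightarrow> complex mat \<Rightarrow> bool" where
  "unitary_mat d U \<longleftrightarrow> U \<in> carrier_mat d d \<and> U * mat_adjoint U = 1\<^sub>m d
     \<and> mat_adjoint U * U = 1\<^sub>m d"

definition tuple_sum :: "nat \<Rightarrow> nat \<Rightarrow> (nat \<Rightarrow> complex mat) \<Rightarrow> complex mat" where
  "tuple_sum d t P = Matrix.mat d d (\<lambda>(j,k). \<Sum>i<t. P i $$ (j,k))"

definition sub_POVM :: "nat \<Rightarrow> nat \<Rightarrow> (nat \<Rightarrow> complex mat) \<Rightarrow> bool" where
  "sub_POVM d t P \<longleftrightarrow> (\<forall>i<t. psd_mat d (P i)) \<and> psd_mat d (1\<^sub>m d - tuple_sum d t P)"

definition norm2' :: "nat \<Rightarrow> nat \<Rightarrow> (nat \<Rightarrow> complex mat) \<Rightarrow> real" where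
  "norm2' d t Y = (\<Sum>i<t. Re (mtrace (mat_adjoint (Y i) * Y i)) / real d)"

definition zeta :: "real \<Rightarrow> real" where
  "zeta x = (if x \<le> 0 then x\<^sup>2 else 0)"

definition mat_fun :: "nat \<Rightarrow> (real \<Rightarrow> real) \<Rightarrow> complex mat \<Rightarrow> complex mat" where
  "mat_fun d f A = (SOME B. \<exists>U lam. unitary_mat d U \<and>
       A = U * mat_diag d (\<lambda>j. complex_of_real (lam j)) * mat_adjoint U \<and>
       B = U * mat_diag d (\<lambda>j. complex_of_real (f (lam j))) * mat_adjoint U)"

end

(* Split each X i into its positive and negative parts, X i = Y i - N i, so that the squared
   Frobenius norm of N i is tr zeta(X i). Then sum Y i = 1 + N with N = sum N i positive
   semidefinite, and P i = S Y i S with S = (1 + N)^(-1/2) is a POVM. In an eigenbasis of N,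
   with eigenvalues mu j and tau j = (1 + mu j)^(-1/2), the entries of Y i - P i are those of
   Y i multiplied by 1 - tau j tau k. In that basis a |-> sum_i sum_jk a j a k |(Y i)jk|^2 is a
   positive semidefinite quadratic form bounded by sum_j a j^2 (1 + mu j)^2, and Cauchy-Schwarz
   for it gives sum_i ||Y i - P i||^2 <= 2 ||N|| (sqrt d + ||N||) for the Frobenius norm.
   Finally ||N||^2 <= t sum_i ||N i||^2, ||X i - P i||^2 <= 3/2 ||Y i - P i||^2 + 3 ||N i||^2,
   and R(X) is at least as close to X as P. *)

theory Submission imports Defs "Jordan_Normal_Form.Spectral_Radius" begin

type_synonym cmat = "complex mat"

section \<open>Adjoints, unitary matrices and the Frobenius norm\<close>

lemma mult_carrier_square [simp]:
  "(A::cmat) \<in> carrier_mat n n \<Longrightarrow> B \<in> carrier_mat n n \<Longrightarrow> A * B \<in> carrier_mat n n"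
  by simp

lemma mat_diag_dims [simp]: "dim_row (mat_diag n f) = n" "dim_col (mat_diag n f) = n"
  unfolding mat_diag_def by simp_all

lemma mat_adjoint_dim [simp]:
  "dim_row (mat_adjoint (A::cmat)) = dim_col A" "dim_col (mat_adjoint (A::cmat)) = dim_row A"
  by (simp_all add: mat_adjoint_def mat_of_rows_def)

lemma mat_adjoint_index [simp]:
  "i < dim_col A \<Longrightarrow> j < dim_row A \<Longrightarrow> mat_adjoint (A::cmat) $$ (i,j) = cnj (A $$ (j,i))"
  by (simp add: mat_adjoint_def mat_of_rows_def)

lemma mat_adjoint_carrier [simp]: "(A::cmat) \<in> carrier_mat n m \<Longrightarrow> mat_adjoint A \<in> carrier_mat m n"
  by (intro carrier_matI) (simp_all only: mat_adjoint_dim carrier_matD)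

lemma mat_adjoint_adjoint [simp]: "mat_adjoint (mat_adjoint (A::cmat)) = A"
  by (rule eq_matI) simp_all

lemma mat_adjoint_one [simp]: "mat_adjoint (1\<^sub>m n :: cmat) = 1\<^sub>m n"
  by (rule eq_matI) simp_all

lemma mat_adjoint_real_diag [simp]:
  "mat_adjoint (mat_diag n (\<lambda>j. complex_of_real (f j))) = mat_diag n (\<lambda>j. complex_of_real (f j))"
  by (rule eq_matI) (simp_all add: mat_diag_def)

lemma mat_adjoint_mult:
  assumes "(A::cmat) \<in> carrier_mat n k" "B \<in> carrier_mat k m"
  shows "mat_adjoint (A * B) = mat_adjoint B * mat_adjoint A"
  by (rule eq_matI) (use assms in \<open>simp_all add: scalar_prod_def mult.commute\<close>)

lemma mat_adjoint_mult3:
  assumes "(A::cmat) \<in> carrier_mat n n" "B \<in> carrier_mat n n" "C \<in> carrier_mat n n"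
  shows "mat_adjoint (A * B * C) = mat_adjoint C * mat_adjoint B * mat_adjoint A"
  using assms by (simp add: mat_adjoint_mult[of _ n n _ n] assoc_mult_mat[of _ n n _ n _ n])

lemma mat_adjoint_add:
  assumes "(A::cmat) \<in> carrier_mat n m" "B \<in> carrier_mat n m"
  shows "mat_adjoint (A + B) = mat_adjoint A + mat_adjoint B"
  by (rule eq_matI) (use assms in simp_all)

lemma mat_adjoint_mult_mat_vec:
  assumes G: "(G::cmat) \<in> carrier_mat n m" and v: "v \<in> carrier_vec n" and w: "w \<in> carrier_vec m"
  shows "conjugate w \<bullet> (mat_adjoint G *\<^sub>v v) = conjugate (G *\<^sub>v w) \<bullet> v"
proof -
  have "conjugate w \<bullet> (mat_adjoint G *\<^sub>v v) = (\<Sum>k<m. \<Sum>j<n. cnj (w $ k) * cnj (G $$ (j,k)) * v $ j)"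
    using assms by (simp add: scalar_prod_def atLeast0LessThan sum_distrib_left mult.assoc)
  also have "\<dots> = (\<Sum>j<n. \<Sum>k<m. cnj (G $$ (j,k)) * cnj (w $ k) * v $ j)"
    by (subst sum.swap) (simp add: mult_ac)
  also have "\<dots> = conjugate (G *\<^sub>v w) \<bullet> v"
    using assms by (simp add: scalar_prod_def atLeast0LessThan sum_distrib_right)
  finally show ?thesis .
qed

lemma unitary_matD:
  assumes "unitary_mat n U"
  shows "U \<in> carrier_mat n n" "mat_adjoint U \<in> carrier_mat n n"
    "U * mat_adjoint U = 1\<^sub>m n" "mat_adjoint U * U = 1\<^sub>m n"
  using assms unfolding unitary_mat_def by auto

lemma unitary_matI_left_inverse:
  assumes "U \<in> carrier_mat n n" "mat_adjoint U * U = 1\<^sub>m n"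
  shows "unitary_mat n U"
  using assms mat_mult_left_right_inverse[OF mat_adjoint_carrier[OF assms(1)] assms]
  unfolding unitary_mat_def by simp

lemma unitary_cancel_left:
  assumes U: "unitary_mat n U" and X: "(X::cmat) \<in> carrier_mat n n"
  shows "mat_adjoint U * (U * X) = X" "U * (mat_adjoint U * X) = X"
  using X by (simp_all add: unitary_matD[OF U] flip: assoc_mult_mat[of _ n n _ n _ n])

lemma unitary_mult:
  assumes U: "unitary_mat n U" and V: "unitary_mat n V"
  shows "unitary_mat n (U * V)"
proof -
  note [simp] = unitary_matD[OF U] unitary_matD[OF V] unitary_cancel_left[OF U] unitary_cancel_left[OF V]
  have "mat_adjoint (U * V) = mat_adjoint V * mat_adjoint U"
    by (simp add: mat_adjoint_mult[of _ n n _ n])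
  then show ?thesis
    unfolding unitary_mat_def by (simp add: assoc_mult_mat[of _ n n _ n _ n])
qed

lemma unitary_conj_cancel:
  assumes U: "unitary_mat n U" and A: "(A::cmat) \<in> carrier_mat n n"
  shows "U * (mat_adjoint U * A * U) * mat_adjoint U = A"
  using A by (simp add: unitary_matD[OF U] assoc_mult_mat[of _ n n _ n _ n] unitary_cancel_left[OF U])

lemma mtrace_comm:
  assumes "(A::cmat) \<in> carrier_mat n m" "B \<in> carrier_mat m n"
  shows "mtrace (A * B) = mtrace (B * A)"
proof -
  have "mtrace (A * B) = (\<Sum>i<n. \<Sum>k<m. A $$ (i,k) * B $$ (k,i))"
    using assms by (simp add: mtrace_def scalar_prod_def atLeast0LessThan)
  also have "\<dots> = (\<Sum>k<m. \<Sum>i<n. B $$ (k,i) * A $$ (i,k))"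
    by (subst sum.swap) (simp add: mult.commute)
  also have "\<dots> = mtrace (B * A)"
    using assms by (simp add: mtrace_def scalar_prod_def atLeast0LessThan)
  finally show ?thesis .
qed

lemma mtrace_diag: "mtrace (mat_diag n f :: cmat) = (\<Sum>j<n. f j)"
  by (simp add: mtrace_def mat_diag_def)

lemma mtrace_unitary_conj:
  assumes U: "unitary_mat n U" and M: "(M::cmat) \<in> carrier_mat n n"
  shows "mtrace (U * M * mat_adjoint U) = mtrace M"
proof -
  note [simp] = unitary_matD[OF U]
  have "mtrace (U * M * mat_adjoint U) = mtrace (mat_adjoint U * (U * M))"
    using M by (intro mtrace_comm[of _ n n]) auto
  also have "mat_adjoint U * (U * M) = M"
    using M by (simp flip: assoc_mult_mat[of _ n n _ n _ n])
  finally show ?thesis .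
qed

definition frob_sq :: "cmat \<Rightarrow> real" where
  "frob_sq A = (\<Sum>i<dim_row A. \<Sum>j<dim_col A. (cmod (A $$ (i,j)))\<^sup>2)"

lemma frob_sq_nonneg: "0 \<le> frob_sq A"
  unfolding frob_sq_def by (intro sum_nonneg) simp

lemma Re_mult_cnj: "Re (z * cnj z) = (cmod z)\<^sup>2"
  by (subst complex_norm_square[symmetric]) simp

lemma frob_sq_eq_trace:
  assumes "(A::cmat) \<in> carrier_mat n m"
  shows "frob_sq A = Re (mtrace (mat_adjoint A * A))"
proof -
  have "Re (mtrace (mat_adjoint A * A)) = (\<Sum>j<m. \<Sum>i<n. Re (A $$ (i,j) * cnj (A $$ (i,j))))"
    using assms by (simp add: mtrace_def scalar_prod_def atLeast0LessThan mult.commute)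
  then show ?thesis
    unfolding frob_sq_def Re_mult_cnj using assms by (simp add: sum.swap[of _ "{..<m}"])
qed

lemma frob_sq_commute:
  assumes "(A::cmat) \<in> carrier_mat n m" "B \<in> carrier_mat n m"
  shows "frob_sq (A - B) = frob_sq (B - A)"
  using assms unfolding frob_sq_def by (simp add: norm_minus_commute)

lemma frob_sq_unitary_conj:
  assumes U: "unitary_mat n U" and A: "(A::cmat) \<in> carrier_mat n n"
  shows "frob_sq (U * A * mat_adjoint U) = frob_sq A"
proof -
  note [simp] = unitary_matD[OF U]
  have "mat_adjoint (U * A * mat_adjoint U) * (U * A * mat_adjoint U)
      = U * mat_adjoint A * mat_adjoint U * (U * A * mat_adjoint U)"
    using A by (simp add: mat_adjoint_mult3[of _ n])
  also have "\<dots> = U * (mat_adjoint A * A) * mat_adjoint U"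
    using A by (simp add: assoc_mult_mat[of _ n n _ n _ n] unitary_cancel_left[OF U])
  finally show ?thesis
    using A by (simp add: frob_sq_eq_trace[of _ n n] mtrace_unitary_conj[OF U])
qed

lemma frob_sq_diag: "frob_sq (mat_diag n f) = (\<Sum>j<n. (cmod (f j))\<^sup>2)"
  by (simp add: frob_sq_def mat_diag_def if_distrib[of "\<lambda>z. (cmod z)\<^sup>2"] cong: if_cong)

lemma frob_sq_diff_le:
  assumes "(A::cmat) \<in> carrier_mat n m" "B \<in> carrier_mat n m"
  shows "frob_sq (A - B) \<le> 3/2 * frob_sq A + 3 * frob_sq B"
proof -
  have entry: "(cmod (a - b))\<^sup>2 \<le> 3/2 * (cmod a)\<^sup>2 + 3 * (cmod b)\<^sup>2" for a b :: complex
  proof -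
    have "(cmod (a - b))\<^sup>2 \<le> (cmod a + cmod b)\<^sup>2"
      by (intro power_mono norm_triangle_ineq4) simp
    also have "\<dots> = 3/2 * (cmod a)\<^sup>2 + 3 * (cmod b)\<^sup>2 - 1/2 * (cmod a - 2 * cmod b)\<^sup>2"
      by (simp add: power2_eq_square algebra_simps)
    moreover have "0 \<le> (cmod a - 2 * cmod b)\<^sup>2" by simp
    ultimately show ?thesis by linarith
  qed
  have "frob_sq (A - B) = (\<Sum>i<n. \<Sum>j<m. (cmod (A $$ (i,j) - B $$ (i,j)))\<^sup>2)"
    unfolding frob_sq_def using assms by simp
  also have "\<dots> \<le> (\<Sum>i<n. \<Sum>j<m. 3/2 * (cmod (A $$ (i,j)))\<^sup>2 + 3 * (cmod (B $$ (i,j)))\<^sup>2)"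
    by (intro sum_mono entry)
  also have "\<dots> = 3/2 * frob_sq A + 3 * frob_sq B"
    unfolding frob_sq_def using assms by (simp add: sum.distrib sum_distrib_left)
  finally show ?thesis .
qed


section \<open>Spectral theorem for Hermitian matrices\<close>

definition diag_conj :: "nat \<Rightarrow> cmat \<Rightarrow> (nat \<Rightarrow> real) \<Rightarrow> cmat" where
  "diag_conj n H f = H * mat_diag n (\<lambda>j. complex_of_real (f j)) * mat_adjoint H"

lemma diag_conj_carrier [simp]: "H \<in> carrier_mat n n \<Longrightarrow> diag_conj n H f \<in> carrier_mat n n"
  unfolding diag_conj_def by simp

lemma diag_conj_dim [simp]:
  "H \<in> carrier_mat n n \<Longrightarrow> dim_row (diag_conj n H f) = n"
  "H \<in> carrier_mat n n \<Longrightarrow> dim_col (diag_conj n H f) = n"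
  using diag_conj_carrier by blast+

lemma diag_conj_index:
  assumes H: "H \<in> carrier_mat n n" and "i < n" "j < n"
  shows "diag_conj n H f $$ (i,j) = (\<Sum>l<n. H $$ (i,l) * complex_of_real (f l) * cnj (H $$ (j,l)))"
  using assms by (simp add: diag_conj_def mat_diag_mult_right[OF H] scalar_prod_def atLeast0LessThan)

lemma diag_conj_diff:
  assumes "H \<in> carrier_mat n n"
  shows "diag_conj n H (\<lambda>j. f j - g j) = diag_conj n H f - diag_conj n H g"
  by (rule eq_matI) (use assms in \<open>simp_all add: diag_conj_index sum_subtractf[symmetric] algebra_simps\<close>)

lemma mult_diag_conj:
  assumes G: "G \<in> carrier_mat n n" and H: "H \<in> carrier_mat n n"
  shows "G * diag_conj n H f * mat_adjoint G = diag_conj n (G * H) f"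
  using assms by (simp add: diag_conj_def mat_adjoint_mult[of _ n n _ n] assoc_mult_mat[of _ n n _ n _ n])

lemma frob_sq_diag_conj: "unitary_mat n U \<Longrightarrow> frob_sq (diag_conj n U f) = (\<Sum>j<n. (f j)\<^sup>2)"
  unfolding diag_conj_def by (simp add: frob_sq_unitary_conj frob_sq_diag)

lemma mtrace_diag_conj: "unitary_mat n U \<Longrightarrow> mtrace (diag_conj n U f) = (\<Sum>j<n. complex_of_real (f j))"
  unfolding diag_conj_def by (simp add: mtrace_unitary_conj mtrace_diag)

lemma cscalar_prod_self:
  assumes "(w::complex vec) \<in> carrier_vec n"
  shows "w \<bullet>c w = complex_of_real (\<Sum>l<n. (cmod (w $ l))\<^sup>2)"
proof -
  have "w \<bullet>c w = (\<Sum>l<n. w $ l * cnj (w $ l))"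
    using assms by (simp add: scalar_prod_def atLeast0LessThan)
  also have "\<dots> = complex_of_real (\<Sum>l<n. (cmod (w $ l))\<^sup>2)"
    unfolding of_real_sum by (intro sum.cong refl) (rule complex_norm_square[symmetric])
  finally show ?thesis .
qed

lemma mat_adjoint_mult_scaled_cols:
  fixes ws :: "complex vec list" and c :: "nat \<Rightarrow> real"
  assumes ws: "\<And>j. j < n \<Longrightarrow> ws ! j \<in> carrier_vec n" and "i < n" "j < n"
  defines "U \<equiv> Matrix.mat n n (\<lambda>(i,j). complex_of_real (c j) * ws ! j $ i)"
  shows "(mat_adjoint U * U) $$ (i,j) = complex_of_real (c i * c j) * (ws ! j \<bullet>c ws ! i)"
proof -
  have "(mat_adjoint U * U) $$ (i,j) = (\<Sum>l<n. cnj (U $$ (l,i)) * U $$ (l,j))"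
    using assms(2,3) unfolding U_def by (simp add: scalar_prod_def atLeast0LessThan)
  also have "\<dots> = (\<Sum>l<n. complex_of_real (c i * c j) * (ws ! j $ l * cnj (ws ! i $ l)))"
    using assms(2,3) unfolding U_def by (intro sum.cong refl) (simp add: ac_simps)
  also have "\<dots> = complex_of_real (c i * c j) * (ws ! j \<bullet>c ws ! i)"
    using ws[OF assms(2)] ws[OF assms(3)] by (simp add: scalar_prod_def atLeast0LessThan sum_distrib_left)
  finally show ?thesis .
qed

lemma unitary_of_corthogonal:
  fixes ws :: "complex vec list"
  assumes ws: "set ws \<subseteq> carrier_vec n" "corthogonal ws" "length ws = n"
  defines "r \<equiv> \<lambda>j. \<Sum>l<n. (cmod (ws ! j $ l))\<^sup>2"
  shows "unitary_mat n (Matrix.mat n n (\<lambda>(i,j). complex_of_real (1 / sqrt (r j)) * ws ! j $ i))"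
    (is "unitary_mat n ?U")
proof -
  have wsc: "ws ! j \<in> carrier_vec n" if "j < n" for j
    using ws that by auto
  have self: "ws ! j \<bullet>c ws ! j = complex_of_real (r j)" if "j < n" for j
    unfolding r_def by (rule cscalar_prod_self[OF wsc[OF that]])
  have r_pos: "r j > 0" if "j < n" for j
  proof -
    have "ws ! j \<bullet>c ws ! j \<noteq> 0"
      using ws(2,3) that unfolding corthogonal_def by auto
    moreover have "r j \<ge> 0"
      unfolding r_def by (intro sum_nonneg) simp
    ultimately show ?thesis
      using self[OF that] by fastforce
  qed
  have "mat_adjoint ?U * ?U = 1\<^sub>m n"
  proof (rule eq_matI)
    fix i j assume "i < dim_row (1\<^sub>m n :: cmat)" "j < dim_col (1\<^sub>m n :: cmat)"
    then have i: "i < n" and j: "j < n" by auto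
    show "(mat_adjoint ?U * ?U) $$ (i,j) = 1\<^sub>m n $$ (i,j)"
    proof (cases "i = j")
      case True
      have "complex_of_real (1 / sqrt (r j) * (1 / sqrt (r j))) * complex_of_real (r j) = 1"
        using r_pos[OF j] by (simp flip: of_real_mult)
      then show ?thesis
        using True self[OF j] i mat_adjoint_mult_scaled_cols[OF wsc j j, where c = "\<lambda>j. 1 / sqrt (r j)"] by simp
    next
      case False
      then show ?thesis
        using ws(2,3) i j mat_adjoint_mult_scaled_cols[OF wsc i j, where c = "\<lambda>j. 1 / sqrt (r j)"] unfolding corthogonal_def by simp
    qed
  qed simp_all
  then show ?thesis
    by (intro unitary_matI_left_inverse) simp
qed

lemma unitary_with_first_col:
  assumes v: "(v::complex vec) \<in> carrier_vec n" and v0: "v \<noteq> 0\<^sub>v n"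
  shows "\<exists>U c. unitary_mat n U \<and> c \<noteq> 0 \<and> col U 0 = c \<cdot>\<^sub>v v"
proof -
  interpret cof_vec_space n "TYPE(complex)" .
  define ws where "ws = gram_schmidt n (basis_completion v)"
  have b: "distinct (basis_completion v)" "\<not> lin_dep (set (basis_completion v))"
    "set (basis_completion v) \<subseteq> carrier_vec n" "hd (basis_completion v) = v"
    "length (basis_completion v) = n"
    using basis_completion[OF v v0] by auto
  have n: "n > 0"
  proof (rule ccontr)
    assume "\<not> n > 0"
    then have "v = 0\<^sub>v n"
      using v by (intro eq_vecI) auto
    with v0 show False ..
  qed
  then obtain vs where bv: "basis_completion v = v # vs"
    using b(4,5) by (cases "basis_completion v") auto
  have ws: "set ws \<subseteq> carrier_vec n" "corthogonal ws" "length ws = n"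
    using gram_schmidt_result[OF b(3,1,2) ws_def] b(5) by auto
  have ws0: "ws ! 0 = v"
    using gram_schmidt_hd[OF v, of vs] ws(3) n unfolding ws_def bv
    by (cases "gram_schmidt n (v # vs)") auto
  define r where "r = (\<lambda>j. \<Sum>l<n. (cmod (ws ! j $ l))\<^sup>2)"
  define U where "U = Matrix.mat n n (\<lambda>(i,j). complex_of_real (1 / sqrt (r j)) * ws ! j $ i)"
  have "unitary_mat n U"
    unfolding U_def r_def by (rule unitary_of_corthogonal[OF ws])
  moreover have "col U 0 = complex_of_real (1 / sqrt (r 0)) \<cdot>\<^sub>v v"
    unfolding U_def using n v ws0 by (intro eq_vecI) auto
  moreover have "r 0 \<noteq> 0"
  proof
    assume "r 0 = 0"
    then have "v = 0\<^sub>v n"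
      using v unfolding r_def ws0 by (intro eq_vecI) (auto simp: sum_nonneg_eq_0_iff)
    with v0 show False ..
  qed
  ultimately show ?thesis
    by (intro exI[of _ U] exI[of _ "complex_of_real (1 / sqrt (r 0))"]) simp
qed


definition block_diag1 :: "nat \<Rightarrow> complex \<Rightarrow> cmat \<Rightarrow> cmat" where
  "block_diag1 k a X = Matrix.mat (Suc k) (Suc k)
     (\<lambda>(i,j). if i = 0 \<and> j = 0 then a else if i = 0 \<or> j = 0 then 0 else X $$ (i - 1, j - 1))"

lemma block_diag1_carrier [simp]: "block_diag1 k a X \<in> carrier_mat (Suc k) (Suc k)"
  and block_diag1_dim [simp]: "dim_row (block_diag1 k a X) = Suc k" "dim_col (block_diag1 k a X) = Suc k"
  unfolding block_diag1_def by simp_all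

lemma block_diag1_mult:
  assumes X: "X \<in> carrier_mat k k" and Y: "Y \<in> carrier_mat k k"
  shows "block_diag1 k a X * block_diag1 k b Y = block_diag1 k (a * b) (X * Y)"
proof (rule eq_matI)
  fix i j assume "i < dim_row (block_diag1 k (a * b) (X * Y))" "j < dim_col (block_diag1 k (a * b) (X * Y))"
  then have i: "i < Suc k" and j: "j < Suc k" by auto
  have "(block_diag1 k a X * block_diag1 k b Y) $$ (i,j)
      = block_diag1 k a X $$ (i,0) * block_diag1 k b Y $$ (0,j)
        + (\<Sum>l<k. block_diag1 k a X $$ (i,Suc l) * block_diag1 k b Y $$ (Suc l,j))"
    using i j by (simp add: scalar_prod_def atLeast0LessThan sum.lessThan_Suc_shift del: sum.lessThan_Suc)
  also have "\<dots> = block_diag1 k (a * b) (X * Y) $$ (i,j)"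
    using i j X Y unfolding block_diag1_def
    by (cases i; cases j) (simp_all add: scalar_prod_def atLeast0LessThan)
  finally show "(block_diag1 k a X * block_diag1 k b Y) $$ (i,j) = block_diag1 k (a * b) (X * Y) $$ (i,j)" .
qed simp_all

lemma block_diag1_adjoint:
  "X \<in> carrier_mat k k \<Longrightarrow> mat_adjoint (block_diag1 k a X) = block_diag1 k (cnj a) (mat_adjoint X)"
  by (rule eq_matI) (auto simp: block_diag1_def)

lemma block_diag1_unitary:
  assumes P: "unitary_mat k P"
  shows "unitary_mat (Suc k) (block_diag1 k 1 P)"
proof -
  have one: "block_diag1 k 1 (1\<^sub>m k) = 1\<^sub>m (Suc k)"
    by (rule eq_matI) (auto simp: block_diag1_def)
  show ?thesis
    using unitary_matD[OF P] unfolding unitary_mat_def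
    by (simp add: block_diag1_adjoint block_diag1_mult one)
qed

lemma block_diag1_diag_conj:
  assumes P: "P \<in> carrier_mat k k"
  shows "block_diag1 k (complex_of_real a) (diag_conj k P f) = diag_conj (Suc k) (block_diag1 k 1 P) (case_nat a f)"
proof -
  have "mat_diag (Suc k) (\<lambda>j. complex_of_real (case_nat a f j))
      = block_diag1 k (complex_of_real a) (mat_diag k (\<lambda>j. complex_of_real (f j)))"
    by (rule eq_matI) (auto simp: block_diag1_def mat_diag_def split: nat.split)
  then show ?thesis
    using P unfolding diag_conj_def by (simp add: block_diag1_adjoint block_diag1_mult)
qed

lemma hermitian_mat_index_cnj:
  assumes B: "hermitian_mat n B" and "i < n" "j < n"
  shows "B $$ (j,i) = cnj (B $$ (i,j))"
proof -
  have Bc: "B \<in> carrier_mat n n" and Bh: "mat_adjoint B = B"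
    using B unfolding hermitian_mat_def by auto
  show ?thesis
    using arg_cong[OF Bh, of "\<lambda>M. M $$ (j,i)"] assms(2,3) Bc by simp
qed

lemma hermitian_block_of_first_col:
  assumes B: "hermitian_mat (Suc k) B"
    and col0: "\<And>i. i < Suc k \<Longrightarrow> B $$ (i,0) = (if i = 0 then e else 0)"
  shows "\<exists>C. hermitian_mat k C \<and> B = block_diag1 k (complex_of_real (Re e)) C"
proof -
  have Bc: "B \<in> carrier_mat (Suc k) (Suc k)"
    using B unfolding hermitian_mat_def by simp
  have e_real: "cnj e = e"
    using hermitian_mat_index_cnj[OF B, of 0 0] col0[of 0] by simp
  have row0: "B $$ (0,j) = (if j = 0 then e else 0)" if j: "j < Suc k" for j
    using hermitian_mat_index_cnj[OF B j zero_less_Suc] col0[OF j] e_real by (cases "j = 0") simp_all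
  define C where "C = Matrix.mat k k (\<lambda>(i,j). B $$ (Suc i, Suc j))"
  have "mat_adjoint C = C"
  proof (rule eq_matI)
    fix i j assume "i < dim_row C" "j < dim_col C"
    then have i: "i < k" and j: "j < k"
      unfolding C_def by auto
    have "mat_adjoint C $$ (i,j) = cnj (B $$ (Suc j, Suc i))"
      using i j unfolding C_def by simp
    also have "\<dots> = C $$ (i,j)"
      using hermitian_mat_index_cnj[OF B, of "Suc j" "Suc i"] i j unfolding C_def by simp
    finally show "mat_adjoint C $$ (i,j) = C $$ (i,j)" .
  qed (simp_all add: C_def)
  then have "hermitian_mat k C"
    unfolding hermitian_mat_def C_def by simp
  moreover have "B = block_diag1 k (complex_of_real (Re e)) C"
  proof (rule eq_matI)
    fix i j assume "i < dim_row (block_diag1 k (complex_of_real (Re e)) C)"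
      "j < dim_col (block_diag1 k (complex_of_real (Re e)) C)"
    then have i: "i < Suc k" and j: "j < Suc k" by auto
    have "complex_of_real (Re e) = e"
      using e_real by (metis Reals_cnj_iff complex_is_Real_iff of_real_Re)
    then show "B $$ (i,j) = block_diag1 k (complex_of_real (Re e)) C $$ (i,j)"
      using col0[OF i] row0[OF j] i j unfolding block_diag1_def C_def
      by (cases i; cases j) auto
  qed (use Bc in auto)
  ultimately show ?thesis
    by blast
qed

lemma hermitian_deflation:
  assumes A: "hermitian_mat (Suc k) A" and W: "unitary_mat (Suc k) W"
    and eig: "A *\<^sub>v col W 0 = e \<cdot>\<^sub>v col W 0"
  shows "\<exists>C. hermitian_mat k C \<and> mat_adjoint W * A * W = block_diag1 k (complex_of_real (Re e)) C"
proof (rule hermitian_block_of_first_col)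
  let ?n = "Suc k"
  note W' = unitary_matD[OF W]
  have Ac: "A \<in> carrier_mat ?n ?n" and Ah: "mat_adjoint A = A"
    using A unfolding hermitian_mat_def by auto
  show "hermitian_mat ?n (mat_adjoint W * A * W)"
    unfolding hermitian_mat_def using Ac W' Ah by (simp add: mat_adjoint_mult3[of _ ?n])
  fix i assume i: "i < ?n"
  have "(mat_adjoint W * A * W) $$ (i,0) = row (mat_adjoint W) i \<bullet> (A *\<^sub>v col W 0)"
    using i Ac W' by (simp add: assoc_mult_mat[of _ ?n ?n _ ?n _ ?n] mult_mat_vec_def)
  also have "\<dots> = e * (row (mat_adjoint W) i \<bullet> col W 0)"
    unfolding eig using i W' by simp
  also have "row (mat_adjoint W) i \<bullet> col W 0 = (mat_adjoint W * W) $$ (i,0)"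
    using i W' by (subst index_mult_mat) auto
  finally show "(mat_adjoint W * A * W) $$ (i,0) = (if i = 0 then e else 0)"
    using i W' by simp
qed

theorem hermitian_spectral:
  "hermitian_mat n A \<Longrightarrow> \<exists>U lam. unitary_mat n U \<and> A = diag_conj n U lam"
proof (induction n arbitrary: A)
  case 0
  then have "A = diag_conj 0 (1\<^sub>m 0) (\<lambda>_. 0)"
    unfolding hermitian_mat_def by (intro eq_matI) auto
  moreover have "unitary_mat 0 (1\<^sub>m 0)"
    unfolding unitary_mat_def by simp
  ultimately show ?case by blast
next
  case (Suc k)
  have Ac: "A \<in> carrier_mat (Suc k) (Suc k)"
    using Suc.prems unfolding hermitian_mat_def by simp
  obtain e where "e \<in> spectrum A"
    using spectrum_non_empty[OF Ac] by blast
  then obtain v where v: "v \<in> carrier_vec (Suc k)" "v \<noteq> 0\<^sub>v (Suc k)" and Av: "A *\<^sub>v v = e \<cdot>\<^sub>v v"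
    using Ac unfolding spectrum_def eigenvalue_def eigenvector_def by auto
  obtain W c where W: "unitary_mat (Suc k) W" and cW: "col W 0 = c \<cdot>\<^sub>v v"
    using unitary_with_first_col[OF v] by auto
  have "A *\<^sub>v col W 0 = e \<cdot>\<^sub>v col W 0"
    unfolding cW using Ac v Av by (simp add: mult_mat_vec smult_smult_assoc mult.commute)
  then obtain C where C: "hermitian_mat k C"
    and WAW: "mat_adjoint W * A * W = block_diag1 k (complex_of_real (Re e)) C"
    using hermitian_deflation[OF Suc.prems W] by blast
  obtain P lam where P: "unitary_mat k P" and CP: "C = diag_conj k P lam"
    using Suc.IH[OF C] by blast
  define U where "U = W * block_diag1 k 1 P"
  have "A = W * (mat_adjoint W * A * W) * mat_adjoint W"
    using unitary_conj_cancel[OF W Ac] by simp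
  also have "\<dots> = diag_conj (Suc k) U (case_nat (Re e) lam)"
    unfolding WAW CP block_diag1_diag_conj[OF unitary_matD(1)[OF P]] U_def
    using unitary_matD(1)[OF W] by (simp add: mult_diag_conj)
  finally show ?case
    using unitary_mult[OF W block_diag1_unitary[OF P]] unfolding U_def by blast
qed

lemma mat_fun_diag_conj:
  assumes "hermitian_mat n A"
  obtains U lam where "unitary_mat n U" "A = diag_conj n U lam"
    "mat_fun n f A = diag_conj n U (\<lambda>j. f (lam j))"
proof -
  have "\<exists>B U lam. unitary_mat n U \<and> A = diag_conj n U lam \<and> B = diag_conj n U (\<lambda>j. f (lam j))"
    using hermitian_spectral[OF assms] by blast
  then have "\<exists>U lam. unitary_mat n U \<and> A = diag_conj n U lam \<and> mat_fun n f A = diag_conj n U (\<lambda>j. f (lam j))"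
    unfolding mat_fun_def diag_conj_def[symmetric] by (rule someI_ex)
  then show ?thesis
    using that by blast
qed


section \<open>Positive semidefinite matrices and tuples\<close>

lemma tuple_sum_index [simp]:
  "i < d \<Longrightarrow> j < d \<Longrightarrow> tuple_sum d t A $$ (i,j) = (\<Sum>l<t. A l $$ (i,j))"
  and tuple_sum_carrier [simp]: "tuple_sum d t A \<in> carrier_mat d d"
  and tuple_sum_dim [simp]: "dim_row (tuple_sum d t A) = d" "dim_col (tuple_sum d t A) = d"
  unfolding tuple_sum_def by simp_all

lemma tuple_sum_0: "tuple_sum d 0 A = 0\<^sub>m d d"
  by (rule eq_matI) simp_all

lemma tuple_sum_Suc:
  "A t \<in> carrier_mat d d \<Longrightarrow> tuple_sum d (Suc t) A = tuple_sum d t A + A t"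
  by (rule eq_matI) simp_all

lemma tuple_sum_mult_conj:
  assumes G: "G \<in> carrier_mat d d" and H: "H \<in> carrier_mat d d"
    and A: "\<And>i. i < t \<Longrightarrow> A i \<in> carrier_mat d d"
  shows "tuple_sum d t (\<lambda>i. G * A i * H) = G * tuple_sum d t A * H"
  using A
proof (induction t)
  case 0
  then show ?case
    using G H by (simp add: tuple_sum_0)
next
  case (Suc t)
  then have "A t \<in> carrier_mat d d"
    by simp
  with Suc G H show ?case
    by (simp add: tuple_sum_Suc add_mult_distrib_mat[of _ d d _ _ d] mult_add_distrib_mat[of _ d d _ d])
qed

lemma frob_sq_tuple_sum_le:
  assumes A: "\<And>i. i < t \<Longrightarrow> A i \<in> carrier_mat d d"
  shows "frob_sq (tuple_sum d t A) \<le> real t * (\<Sum>i<t. frob_sq (A i))"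
proof -
  have "frob_sq (tuple_sum d t A) = (\<Sum>j<d. \<Sum>k<d. (cmod (\<Sum>i<t. A i $$ (j,k)))\<^sup>2)"
    unfolding frob_sq_def by simp
  also have "\<dots> \<le> (\<Sum>j<d. \<Sum>k<d. real t * (\<Sum>i<t. (cmod (A i $$ (j,k)))\<^sup>2))"
  proof (intro sum_mono)
    fix j k
    have "(cmod (\<Sum>i<t. A i $$ (j,k)))\<^sup>2 \<le> (\<Sum>i<t. cmod (A i $$ (j,k)))\<^sup>2"
      by (intro power_mono norm_sum) simp
    also have "\<dots> \<le> real t * (\<Sum>i<t. (cmod (A i $$ (j,k)))\<^sup>2)"
      using sum_squared_le_sum_of_squares[of "\<lambda>i. cmod (A i $$ (j,k))" "{..<t}"] by (simp add: mult.commute)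
    finally show "(cmod (\<Sum>i<t. A i $$ (j,k)))\<^sup>2 \<le> real t * (\<Sum>i<t. (cmod (A i $$ (j,k)))\<^sup>2)" .
  qed
  also have "\<dots> = real t * (\<Sum>i<t. \<Sum>j<d. \<Sum>k<d. (cmod (A i $$ (j,k)))\<^sup>2)"
    by (simp add: sum_distrib_left sum.swap[of _ "{..<d}" "{..<t}"] sum.swap[of _ "{..<d}" "{..<t}"])
  also have "\<dots> = real t * (\<Sum>i<t. frob_sq (A i))"
  proof -
    have "frob_sq (A i) = (\<Sum>j<d. \<Sum>k<d. (cmod (A i $$ (j,k)))\<^sup>2)" if "i < t" for i
      using A[OF that] unfolding frob_sq_def by simp
    then show ?thesis
      by simp
  qed
  finally show ?thesis .
qed

lemma psd_mat_carrier: "psd_mat n A \<Longrightarrow> A \<in> carrier_mat n n"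
  unfolding psd_mat_def hermitian_mat_def by simp

lemma psd_mult_conj:
  assumes A: "psd_mat n A" and G: "G \<in> carrier_mat n n"
  shows "psd_mat n (G * A * mat_adjoint G)"
proof -
  have Ac: "A \<in> carrier_mat n n" and Ah: "mat_adjoint A = A"
    using A unfolding psd_mat_def hermitian_mat_def by auto
  have "hermitian_mat n (G * A * mat_adjoint G)"
    unfolding hermitian_mat_def using Ac Ah G by (simp add: mat_adjoint_mult3[of _ n])
  moreover have "0 \<le> Re (conjugate v \<bullet> ((G * A * mat_adjoint G) *\<^sub>v v))" if v: "v \<in> carrier_vec n" for v
  proof -
    let ?w = "mat_adjoint G *\<^sub>v v"
    have w: "?w \<in> carrier_vec n"
      using G v by (intro mult_mat_vec_carrier[of _ n n]) auto
    have "conjugate v \<bullet> ((G * A * mat_adjoint G) *\<^sub>v v) = conjugate v \<bullet> (mat_adjoint (mat_adjoint G) *\<^sub>v (A *\<^sub>v ?w))"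
      using Ac G v w by (simp add: assoc_mult_mat_vec[of _ n n _ n])
    also have "\<dots> = conjugate ?w \<bullet> (A *\<^sub>v ?w)"
      using G v mult_mat_vec_carrier[OF Ac w] by (intro mat_adjoint_mult_mat_vec[of _ n n]) auto
    finally show ?thesis
      using A w unfolding psd_mat_def by simp
  qed
  ultimately show ?thesis
    unfolding psd_mat_def by blast
qed

lemma psd_real_diag:
  assumes f: "\<And>j. j < n \<Longrightarrow> 0 \<le> f j"
  shows "psd_mat n (mat_diag n (\<lambda>j. complex_of_real (f j)))"
proof -
  have "0 \<le> Re (conjugate v \<bullet> (mat_diag n (\<lambda>j. complex_of_real (f j)) *\<^sub>v v))" if v: "v \<in> carrier_vec n" for v
  proof -
    have "mat_diag n (\<lambda>j. complex_of_real (f j)) *\<^sub>v v = vec n (\<lambda>j. complex_of_real (f j) * v $ j)"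
      using v by (intro eq_vecI) (simp_all add: mat_diag_def scalar_prod_def atLeast0LessThan if_distrib if_distribR cong: if_cong)
    then have "Re (conjugate v \<bullet> (mat_diag n (\<lambda>j. complex_of_real (f j)) *\<^sub>v v))
        = (\<Sum>j<n. f j * Re (v $ j * cnj (v $ j)))"
      using v by (simp add: scalar_prod_def atLeast0LessThan mult_ac distrib_left sum.distrib)
    then show ?thesis
      using f by (auto intro!: sum_nonneg mult_nonneg_nonneg)
  qed
  then show ?thesis
    unfolding psd_mat_def hermitian_mat_def by simp
qed

lemma psd_diag_conj:
  "H \<in> carrier_mat n n \<Longrightarrow> (\<And>j. j < n \<Longrightarrow> 0 \<le> f j) \<Longrightarrow> psd_mat n (diag_conj n H f)"
  unfolding diag_conj_def by (intro psd_mult_conj psd_real_diag)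

lemma psd_zero: "psd_mat n (0\<^sub>m n n)"
proof -
  have "mat_diag n (\<lambda>j. complex_of_real 0) = 0\<^sub>m n n"
    by (rule eq_matI) (auto simp: mat_diag_def)
  then show ?thesis
    using psd_real_diag[of n "\<lambda>_. 0"] by simp
qed

lemma psd_add:
  assumes A: "psd_mat n A" and B: "psd_mat n B"
  shows "psd_mat n (A + B)"
proof -
  have Ac: "A \<in> carrier_mat n n" "mat_adjoint A = A" and Bc: "B \<in> carrier_mat n n" "mat_adjoint B = B"
    using A B unfolding psd_mat_def hermitian_mat_def by auto
  have "mat_adjoint (A + B) = A + B"
    using Ac Bc by (simp add: mat_adjoint_add[of _ n n])
  moreover have "conjugate v \<bullet> ((A + B) *\<^sub>v v) = conjugate v \<bullet> (A *\<^sub>v v) + conjugate v \<bullet> (B *\<^sub>v v)"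
    if "v \<in> carrier_vec n" for v
    using Ac Bc that by (simp add: add_mult_distrib_mat_vec[of _ n n] scalar_prod_add_distrib[of _ n])
  ultimately show ?thesis
    using A B unfolding psd_mat_def hermitian_mat_def by (simp add: Ac(1) Bc(1))
qed

lemma psd_tuple_sum:
  "(\<And>i. i < t \<Longrightarrow> psd_mat d (A i)) \<Longrightarrow> psd_mat d (tuple_sum d t A)"
proof (induction t)
  case 0
  then show ?case by (simp add: tuple_sum_0 psd_zero)
next
  case (Suc t)
  then have "A t \<in> carrier_mat d d"
    unfolding psd_mat_def hermitian_mat_def by simp
  then show ?case
    using Suc by (simp add: tuple_sum_Suc psd_add)
qed

lemma psd_diag_entry_nonneg:
  assumes A: "psd_mat n A" and j: "j < n"
  shows "0 \<le> Re (A $$ (j,j))"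
proof -
  have Ac: "A \<in> carrier_mat n n"
    by (rule psd_mat_carrier[OF A])
  have "conjugate (unit_vec n j) = (unit_vec n j :: complex vec)"
    by (intro eq_vecI) (auto simp: unit_vec_def)
  then have "conjugate (unit_vec n j) \<bullet> (A *\<^sub>v unit_vec n j) = A $$ (j,j)"
    using Ac j by simp
  then show ?thesis
    using A unfolding psd_mat_def by (metis unit_vec_carrier)
qed

lemma psd_spectral:
  assumes A: "psd_mat n A"
  obtains U lam where "unitary_mat n U" "A = diag_conj n U lam" "\<And>j. j < n \<Longrightarrow> 0 \<le> lam j"
proof -
  obtain U lam where U: "unitary_mat n U" and AU: "A = diag_conj n U lam"
    using hermitian_spectral A unfolding psd_mat_def by blast
  note U' = unitary_matD[OF U]
  have "mat_adjoint U * A * mat_adjoint (mat_adjoint U) = mat_diag n (\<lambda>j. complex_of_real (lam j))"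
    unfolding AU mult_diag_conj[OF U'(2) U'(1)] unfolding U'(4) diag_conj_def by simp
  then have diag: "psd_mat n (mat_diag n (\<lambda>j. complex_of_real (lam j)))"
    using psd_mult_conj[OF A U'(2)] by simp
  have "0 \<le> lam j" if "j < n" for j
    using psd_diag_entry_nonneg[OF diag that] that by (simp add: mat_diag_def)
  then show ?thesis
    using that U AU by blast
qed

lemma trace_psd_mult_nonneg:
  assumes A: "psd_mat n A" and B: "psd_mat n B"
  shows "0 \<le> Re (mtrace (A * B))"
proof -
  obtain V mu where V: "unitary_mat n V" and BV: "B = diag_conj n V mu" and mu: "\<And>j. j < n \<Longrightarrow> 0 \<le> mu j"
    using psd_spectral[OF B] by blast
  note V' = unitary_matD[OF V]
  have Ac: "A \<in> carrier_mat n n"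
    by (rule psd_mat_carrier[OF A])
  define D where "D = mat_diag n (\<lambda>j. complex_of_real (mu j))"
  define A' where "A' = mat_adjoint V * A * V"
  have A'c: "A' \<in> carrier_mat n n"
    unfolding A'_def using Ac V' by simp
  have A': "psd_mat n A'"
    using psd_mult_conj[OF A V'(2)] unfolding A'_def by simp
  have "mtrace (A * B) = mtrace ((A * V * D) * mat_adjoint V)"
    unfolding BV diag_conj_def D_def using Ac V' by (simp add: assoc_mult_mat[of _ n n _ n _ n])
  also have "\<dots> = mtrace (mat_adjoint V * (A * V * D))"
    using Ac V' unfolding D_def by (intro mtrace_comm[of _ n n]) auto
  also have "mat_adjoint V * (A * V * D) = A' * D"
    unfolding A'_def D_def using Ac V' by (simp add: assoc_mult_mat[of _ n n _ n _ n])
  also have "mtrace (A' * D) = (\<Sum>j<n. A' $$ (j,j) * complex_of_real (mu j))"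
    unfolding D_def by (simp add: mtrace_def mat_diag_mult_right[OF A'c])
  finally have "Re (mtrace (A * B)) = (\<Sum>j<n. Re (A' $$ (j,j)) * mu j)"
    by simp
  also have "\<dots> \<ge> 0"
    using psd_diag_entry_nonneg[OF A'] mu by (intro sum_nonneg mult_nonneg_nonneg) auto
  finally show ?thesis .
qed


section \<open>A quadratic form on the entries of a decomposition of a diagonal matrix\<close>

lemma weighted_entry_product_eq_trace:
  fixes a :: "nat \<Rightarrow> real"
  assumes A: "hermitian_mat n A" and B: "hermitian_mat n B"
  defines "D \<equiv> mat_diag n (\<lambda>j. complex_of_real (a j))"
  shows "(\<Sum>j<n. \<Sum>k<n. complex_of_real (a j * a k) * A $$ (j,k) * cnj (B $$ (j,k))) = mtrace (D * A * D * B)"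
proof -
  have Ac: "A \<in> carrier_mat n n" and Bc: "B \<in> carrier_mat n n"
    using A B unfolding hermitian_mat_def by auto
  have "cnj (B $$ (j,k)) = B $$ (k,j)" if "j < n" "k < n" for j k
    using hermitian_mat_index_cnj[OF B that] by simp
  moreover have "(D * A * D) $$ (j,k) = complex_of_real (a j * a k) * A $$ (j,k)"
    if "j < n" "k < n" for j k
    using that Ac unfolding D_def by (simp add: mat_diag_mult_left[of _ n n] mat_diag_mult_right[of _ n n])
  moreover have "mtrace (D * A * D * B) = (\<Sum>j<n. \<Sum>k<n. (D * A * D) $$ (j,k) * B $$ (k,j))"
    using Ac Bc unfolding D_def by (simp add: mtrace_def scalar_prod_def atLeast0LessThan)
  ultimately show ?thesis
    by simp
qed

lemma weighted_entry_product_nonneg: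
  assumes A: "psd_mat n A" and B: "psd_mat n B"
  shows "0 \<le> Re (\<Sum>j<n. \<Sum>k<n. complex_of_real (a j * a k) * A $$ (j,k) * cnj (B $$ (j,k)))"
proof -
  let ?D = "mat_diag n (\<lambda>j. complex_of_real (a j))"
  have "psd_mat n (?D * A * ?D)"
    using psd_mult_conj[OF A, of ?D] by simp
  then show ?thesis
    using A B unfolding weighted_entry_product_eq_trace[OF A[unfolded psd_mat_def, THEN conjunct1]
        B[unfolded psd_mat_def, THEN conjunct1]]
    by (intro trace_psd_mult_nonneg)
qed

lemma weighted_entry_sum_nonneg:
  assumes "psd_mat n W"
  shows "0 \<le> (\<Sum>j<n. \<Sum>k<n. a j * a k * (cmod (W $$ (j,k)))\<^sup>2)"
  using weighted_entry_product_nonneg[OF assms assms, of a]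
  by (simp add: mult.assoc flip: Re_mult_cnj)

lemma sum_swap4:
  "(\<Sum>i\<in>I. \<Sum>l\<in>L. \<Sum>j\<in>J. \<Sum>k\<in>K. f i l j k) = (\<Sum>j\<in>J. \<Sum>k\<in>K. \<Sum>i\<in>I. \<Sum>l\<in>L. f i l j k)"
proof -
  have "(\<Sum>i\<in>I. \<Sum>l\<in>L. \<Sum>j\<in>J. \<Sum>k\<in>K. f i l j k) = (\<Sum>i\<in>I. \<Sum>j\<in>J. \<Sum>k\<in>K. \<Sum>l\<in>L. f i l j k)"
    by (intro sum.cong refl) (simp add: sum.swap[of _ _ L])
  also have "\<dots> = (\<Sum>j\<in>J. \<Sum>k\<in>K. \<Sum>i\<in>I. \<Sum>l\<in>L. f i l j k)"
    by (simp add: sum.swap[of _ _ I])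
  finally show ?thesis .
qed

lemma weighted_entry_sum_le:
  assumes psd: "\<And>i. i < t \<Longrightarrow> psd_mat n (W i)"
    and sum: "tuple_sum n t W = mat_diag n (\<lambda>j. complex_of_real (\<sigma> j))"
  shows "(\<Sum>i<t. \<Sum>j<n. \<Sum>k<n. a j * a k * (cmod (W i $$ (j,k)))\<^sup>2) \<le> (\<Sum>j<n. (a j * \<sigma> j)\<^sup>2)"
proof -
  define c where "c i l = (\<Sum>j<n. \<Sum>k<n. complex_of_real (a j * a k) * W i $$ (j,k) * cnj (W l $$ (j,k)))" for i l
  have entry_sum: "(\<Sum>i<t. W i $$ (j,k)) = (if j = k then complex_of_real (\<sigma> j) else 0)" if "j < n" "k < n" for j k
    using arg_cong[OF sum, of "\<lambda>M. M $$ (j,k)"] that by (simp add: mat_diag_def)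
  have "(\<Sum>i<t. \<Sum>l<t. c i l)
      = (\<Sum>j<n. \<Sum>k<n. \<Sum>i<t. \<Sum>l<t. complex_of_real (a j * a k) * W i $$ (j,k) * cnj (W l $$ (j,k)))"
    unfolding c_def by (rule sum_swap4)
  also have "\<dots> = (\<Sum>j<n. \<Sum>k<n. complex_of_real (a j * a k) * (\<Sum>i<t. \<Sum>l<t. W i $$ (j,k) * cnj (W l $$ (j,k))))"
    by (intro sum.cong refl) (simp only: sum_distrib_left mult.assoc)
  also have "\<dots> = (\<Sum>j<n. \<Sum>k<n. complex_of_real (a j * a k) * (\<Sum>i<t. W i $$ (j,k)) * cnj (\<Sum>l<t. W l $$ (j,k)))"
    by (simp only: cnj_sum sum_product mult.assoc)
  also have "\<dots> = (\<Sum>j<n. \<Sum>k<n. if j = k then complex_of_real ((a j * \<sigma> j)\<^sup>2) else 0)"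
    by (intro sum.cong refl) (simp add: entry_sum power2_eq_square)
  also have "\<dots> = complex_of_real (\<Sum>j<n. (a j * \<sigma> j)\<^sup>2)"
    by simp
  finally have "Re (\<Sum>i<t. \<Sum>l<t. c i l) = (\<Sum>j<n. (a j * \<sigma> j)\<^sup>2)"
    by (simp only: Re_complex_of_real)
  then have total: "(\<Sum>i<t. \<Sum>l<t. Re (c i l)) = (\<Sum>j<n. (a j * \<sigma> j)\<^sup>2)"
    by (simp only: Re_sum)
  have "(\<Sum>i<t. \<Sum>j<n. \<Sum>k<n. a j * a k * (cmod (W i $$ (j,k)))\<^sup>2) = (\<Sum>i<t. Re (c i i))"
    unfolding c_def by (simp add: mult.assoc flip: Re_mult_cnj)
  also have "\<dots> \<le> (\<Sum>i<t. \<Sum>l<t. Re (c i l))"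
    unfolding c_def using psd
    by (intro sum_mono member_le_sum weighted_entry_product_nonneg) auto
  finally show ?thesis
    unfolding total .
qed

lemma nonneg_quadratic_coeff_le:
  fixes a b c :: real
  assumes nonneg: "\<And>x. 0 \<le> x\<^sup>2 * a - x * b + c" and a: "0 \<le> a"
  shows "b \<le> 2 * sqrt a * sqrt c"
proof -
  have c: "0 \<le> c"
    using nonneg[of 0] by simp
  show ?thesis
  proof (cases "b \<le> 0")
    case True
    moreover have "0 \<le> 2 * sqrt a * sqrt c"
      using a c by simp
    ultimately show ?thesis
      by linarith
  next
    case False
    have "a \<noteq> 0"
    proof
      assume a0: "a = 0"
      have "(c + 1) / b * b = c + 1"
        using False by simp
      then show False
        using nonneg[of "(c + 1) / b"] a0 by simp
    qed
    with a have a_pos: "0 < a" by simp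
    have "(b / (2 * a))\<^sup>2 * a - b / (2 * a) * b + c = c - b\<^sup>2 / (4 * a)"
      using a_pos by (simp add: field_simps power2_eq_square)
    then have "b\<^sup>2 / (4 * a) \<le> c"
      using nonneg[of "b / (2 * a)"] by linarith
    then have "b\<^sup>2 \<le> c * (4 * a)"
      using a_pos pos_divide_le_eq[of "4 * a" "b\<^sup>2" c] by simp
    moreover have "(2 * sqrt a * sqrt c)\<^sup>2 = 4 * a * c"
      using a_pos c by (simp add: power_mult_distrib)
    ultimately have "b\<^sup>2 \<le> (2 * sqrt a * sqrt c)\<^sup>2"
      by (simp add: mult_ac)
    then show ?thesis
      by (rule power2_le_imp_le) (use a c in simp)
  qed
qed

lemma cross_sum_le:
  fixes w :: "'i \<Rightarrow> nat \<Rightarrow> nat \<Rightarrow> real"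
  assumes nonneg: "\<And>a. 0 \<le> (\<Sum>i\<in>I. \<Sum>j<n. \<Sum>k<n. a j * a k * w i j k)"
  shows "(\<Sum>i\<in>I. \<Sum>j<n. \<Sum>k<n. (g j + g k) * w i j k)
    \<le> 2 * sqrt (\<Sum>i\<in>I. \<Sum>j<n. \<Sum>k<n. g j * g k * w i j k) * sqrt (\<Sum>i\<in>I. \<Sum>j<n. \<Sum>k<n. w i j k)"
proof (rule nonneg_quadratic_coeff_le)
  fix x :: real
  have "(\<Sum>i\<in>I. \<Sum>j<n. \<Sum>k<n. (x * g j - 1) * (x * g k - 1) * w i j k)
      = x\<^sup>2 * (\<Sum>i\<in>I. \<Sum>j<n. \<Sum>k<n. g j * g k * w i j k)
        - x * (\<Sum>i\<in>I. \<Sum>j<n. \<Sum>k<n. (g j + g k) * w i j k) + (\<Sum>i\<in>I. \<Sum>j<n. \<Sum>k<n. w i j k)"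
    by (simp add: algebra_simps power2_eq_square sum.distrib sum_subtractf sum_distrib_left)
  then show "0 \<le> x\<^sup>2 * (\<Sum>i\<in>I. \<Sum>j<n. \<Sum>k<n. g j * g k * w i j k)
      - x * (\<Sum>i\<in>I. \<Sum>j<n. \<Sum>k<n. (g j + g k) * w i j k) + (\<Sum>i\<in>I. \<Sum>j<n. \<Sum>k<n. w i j k)"
    using nonneg[of "\<lambda>j. x * g j - 1"] by simp
qed (use nonneg[of g] in simp)


section \<open>Normalising a decomposition to a POVM\<close>

lemma frob_sq_diff_diag_scale:
  fixes s :: "nat \<Rightarrow> real"
  assumes A: "A \<in> carrier_mat n n"
  defines "D \<equiv> mat_diag n (\<lambda>j. complex_of_real (s j))"
  shows "frob_sq (A - D * A * D) = (\<Sum>j<n. \<Sum>k<n. (1 - s j * s k)\<^sup>2 * (cmod (A $$ (j,k)))\<^sup>2)"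
proof -
  have "(A - D * A * D) $$ (j,k) = complex_of_real (1 - s j * s k) * A $$ (j,k)" if jk: "j < n" "k < n" for j k
  proof -
    have "(A - D * A * D) $$ (j,k) = A $$ (j,k) - (D * A * D) $$ (j,k)"
      using jk unfolding D_def by (intro index_minus_mat) auto
    also have "(D * A * D) $$ (j,k) = complex_of_real (s j * s k) * A $$ (j,k)"
      using A jk unfolding D_def by (simp add: mat_diag_mult_left[of _ n n] mat_diag_mult_right[of _ n n])
    finally show ?thesis
      by (simp add: algebra_simps)
  qed
  then show ?thesis
    unfolding frob_sq_def using A unfolding D_def
    by (simp add: norm_mult power_mult_distrib del: of_real_diff of_real_mult)
qed

lemma one_minus_mult_sq_le:
  fixes x y :: real
  assumes "0 \<le> x" "x \<le> 1" "0 \<le> y" "y \<le> 1"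
  shows "(1 - x * y)\<^sup>2 \<le> (1 - x) + (1 - y)"
proof -
  have "0 \<le> x * y" "x * y \<le> 1" "0 \<le> (1 - x) * (1 - y)"
    using assms by (auto intro: mult_le_one)
  then have "(1 - x * y)\<^sup>2 \<le> 1 - x * y"
    using mult_left_le[of "1 - x * y" "1 - x * y"] by (simp add: power2_eq_square)
  moreover have "(1 - x) * (1 - y) = 1 - x - y + x * y"
    by (simp add: algebra_simps)
  ultimately show ?thesis
    using \<open>0 \<le> (1 - x) * (1 - y)\<close> by linarith
qed

lemma one_minus_inv_sqrt_mult_le:
  fixes x :: real
  assumes "1 \<le> x"
  shows "((1 - 1 / sqrt x) * x)\<^sup>2 \<le> (x - 1)\<^sup>2"
proof -
  have "(1 - 1 / sqrt x) * x = x - sqrt x"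
    using assms by (simp add: field_simps real_sqrt_divide)
  moreover have "1 \<le> sqrt x"
    using assms by simp
  moreover have "sqrt x \<le> x"
  proof -
    have "sqrt x * 1 \<le> sqrt x * sqrt x"
      using assms by (intro mult_left_mono) auto
    then show ?thesis
      using assms by simp
  qed
  ultimately show ?thesis
    by (intro power_mono) simp_all
qed

lemma L2_set_le_sqrt_add:
  fixes f :: "nat \<Rightarrow> real"
  shows "L2_set f {..<n} \<le> sqrt n + L2_set (\<lambda>j. f j - 1) {..<n}"
proof -
  have "L2_set f {..<n} = L2_set (\<lambda>j. 1 + (f j - 1)) {..<n}"
    by simp
  also have "\<dots> \<le> L2_set (\<lambda>j. 1) {..<n} + L2_set (\<lambda>j. f j - 1) {..<n}"
    by (rule L2_set_triangle_ineq)
  finally show ?thesis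
    by (simp add: L2_set_def)
qed

lemma diag_scale_tuple_sum:
  assumes W: "\<And>i. i < t \<Longrightarrow> W i \<in> carrier_mat n n"
    and sum: "tuple_sum n t W = mat_diag n (\<lambda>j. complex_of_real (\<sigma> j))"
    and \<sigma>: "\<And>j. j < n \<Longrightarrow> 0 < \<sigma> j"
  defines "T \<equiv> mat_diag n (\<lambda>j. complex_of_real (1 / sqrt (\<sigma> j)))"
  shows "tuple_sum n t (\<lambda>i. T * W i * T) = 1\<^sub>m n"
proof -
  have "tuple_sum n t (\<lambda>i. T * W i * T) = T * mat_diag n (\<lambda>j. complex_of_real (\<sigma> j)) * T"
    using W unfolding T_def by (simp add: tuple_sum_mult_conj sum)
  also have "\<dots> = mat_diag n (\<lambda>j. 1)"
  proof -
    have "1 / sqrt (\<sigma> j) * \<sigma> j * (1 / sqrt (\<sigma> j)) = 1" if "j < n" for j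
    proof -
      have "sqrt (\<sigma> j) * sqrt (\<sigma> j) = \<sigma> j"
        using \<sigma>[OF that] by simp
      then show ?thesis
        using \<sigma>[OF that] by (simp add: field_simps)
    qed
    then show ?thesis
      unfolding T_def mat_diag_diag by (intro eq_matI) (auto simp: mat_diag_def simp flip: of_real_mult)
  qed
  finally show ?thesis
    by simp
qed

lemma diag_scale_distance:
  assumes psd: "\<And>i. i < t \<Longrightarrow> psd_mat n (W i)"
    and sum: "tuple_sum n t W = mat_diag n (\<lambda>j. complex_of_real (\<sigma> j))"
    and \<sigma>: "\<And>j. j < n \<Longrightarrow> 1 \<le> \<sigma> j"
  defines "T \<equiv> mat_diag n (\<lambda>j. complex_of_real (1 / sqrt (\<sigma> j)))"
  shows "(\<Sum>i<t. frob_sq (W i - T * W i * T))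
    \<le> 2 * L2_set (\<lambda>j. \<sigma> j - 1) {..<n} * (sqrt n + L2_set (\<lambda>j. \<sigma> j - 1) {..<n})"
proof -
  define g where "g j = 1 - 1 / sqrt (\<sigma> j)" for j
  define w where "w i j k = (cmod (W i $$ (j,k)))\<^sup>2" for i j k
  let ?\<nu> = "L2_set (\<lambda>j. \<sigma> j - 1) {..<n}"
  have Wc: "W i \<in> carrier_mat n n" if "i < t" for i
    by (rule psd_mat_carrier[OF psd[OF that]])
  have inv_sqrt: "0 \<le> 1 / sqrt (\<sigma> j)" "1 / sqrt (\<sigma> j) \<le> 1" if "j < n" for j
    using \<sigma>[OF that] by simp_all
  have form_nonneg: "0 \<le> (\<Sum>i<t. \<Sum>j<n. \<Sum>k<n. a j * a k * w i j k)" for a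
    using psd unfolding w_def by (intro sum_nonneg weighted_entry_sum_nonneg) auto
  have "frob_sq (W i - T * W i * T) = (\<Sum>j<n. \<Sum>k<n. (1 - 1 / sqrt (\<sigma> j) * (1 / sqrt (\<sigma> k)))\<^sup>2 * w i j k)"
    if "i < t" for i
    unfolding T_def w_def by (rule frob_sq_diff_diag_scale[OF Wc[OF that]])
  then have "(\<Sum>i<t. frob_sq (W i - T * W i * T))
      = (\<Sum>i<t. \<Sum>j<n. \<Sum>k<n. (1 - 1 / sqrt (\<sigma> j) * (1 / sqrt (\<sigma> k)))\<^sup>2 * w i j k)"
    by simp
  also have "\<dots> \<le> (\<Sum>i<t. \<Sum>j<n. \<Sum>k<n. (g j + g k) * w i j k)"
    unfolding g_def w_def using inv_sqrt by (intro sum_mono mult_right_mono one_minus_mult_sq_le) auto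
  also have "\<dots> \<le> 2 * sqrt (\<Sum>i<t. \<Sum>j<n. \<Sum>k<n. g j * g k * w i j k) * sqrt (\<Sum>i<t. \<Sum>j<n. \<Sum>k<n. w i j k)"
    by (rule cross_sum_le[OF form_nonneg])
  also have "\<dots> \<le> 2 * ?\<nu> * (sqrt n + ?\<nu>)"
  proof (intro mult_mono mult_left_mono)
    have "(\<Sum>i<t. \<Sum>j<n. \<Sum>k<n. g j * g k * w i j k) \<le> (\<Sum>j<n. (g j * \<sigma> j)\<^sup>2)"
      unfolding w_def by (rule weighted_entry_sum_le[OF psd sum])
    also have "\<dots> \<le> (\<Sum>j<n. (\<sigma> j - 1)\<^sup>2)"
      unfolding g_def using \<sigma> by (intro sum_mono one_minus_inv_sqrt_mult_le) auto
    finally show "sqrt (\<Sum>i<t. \<Sum>j<n. \<Sum>k<n. g j * g k * w i j k) \<le> ?\<nu>"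
      unfolding L2_set_def by (rule real_sqrt_le_mono)
    have "(\<Sum>i<t. \<Sum>j<n. \<Sum>k<n. w i j k) \<le> (\<Sum>j<n. (\<sigma> j)\<^sup>2)"
      using weighted_entry_sum_le[OF psd sum, of "\<lambda>_. 1"] unfolding w_def by simp
    then have "sqrt (\<Sum>i<t. \<Sum>j<n. \<Sum>k<n. w i j k) \<le> L2_set \<sigma> {..<n}"
      unfolding L2_set_def by (rule real_sqrt_le_mono)
    then show "sqrt (\<Sum>i<t. \<Sum>j<n. \<Sum>k<n. w i j k) \<le> sqrt n + ?\<nu>"
      using L2_set_le_sqrt_add[of \<sigma> n] by linarith
  qed (use form_nonneg[of g] form_nonneg[of "\<lambda>_. 1"] in \<open>simp_all add: L2_set_nonneg\<close>)
  finally show ?thesis .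
qed

lemma unitary_conj_one_add_diag_conj:
  assumes V: "unitary_mat d V"
  shows "mat_adjoint V * (1\<^sub>m d + diag_conj d V \<mu>) * V = mat_diag d (\<lambda>j. complex_of_real (1 + \<mu> j))"
proof -
  note V' = unitary_matD[OF V]
  have "mat_adjoint V * (1\<^sub>m d + diag_conj d V \<mu>) * V = mat_adjoint V * V + mat_adjoint V * diag_conj d V \<mu> * V"
    using V' by (simp add: mult_add_distrib_mat[of _ d d _ d] add_mult_distrib_mat[of _ d d _ _ d])
  also have "mat_adjoint V * diag_conj d V \<mu> * V = mat_diag d (\<lambda>j. complex_of_real (\<mu> j))"
    using mult_diag_conj[OF V'(2) V'(1), of \<mu>] V'(4) by (simp add: diag_conj_def)
  finally show ?thesis
    unfolding V'(4) by (intro eq_matI) (auto simp: mat_diag_def)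
qed

lemma sub_POVM_of_tuple_sum_one:
  assumes "\<And>i. i < t \<Longrightarrow> psd_mat d (P i)" and "tuple_sum d t P = 1\<^sub>m d"
  shows "sub_POVM d t P"
proof -
  have "1\<^sub>m d - tuple_sum d t P = 0\<^sub>m d d"
    unfolding assms(2) by (intro eq_matI) auto
  then show ?thesis
    unfolding sub_POVM_def using assms(1) psd_zero by simp
qed

lemma frob_sq_unitary_conj_diff:
  assumes V: "unitary_mat d V" and "A \<in> carrier_mat d d" "B \<in> carrier_mat d d"
  shows "frob_sq (V * A * mat_adjoint V - V * B * mat_adjoint V) = frob_sq (A - B)"
proof -
  have "V * A * mat_adjoint V - V * B * mat_adjoint V = V * (A - B) * mat_adjoint V"
    using assms unitary_matD[OF V]
    by (simp add: mult_minus_distrib_mat[of _ d d _ d] minus_mult_distrib_mat[of _ d d _ _ d])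
  then show ?thesis
    using assms frob_sq_unitary_conj[OF V, of "A - B"] by (simp add: minus_carrier_mat)
qed

lemma sub_POVM_near_psd_decomposition:
  assumes Y: "\<And>i. i < t \<Longrightarrow> psd_mat d (Y i)" and N: "psd_mat d N"
    and sum: "tuple_sum d t Y = 1\<^sub>m d + N"
  shows "\<exists>P. sub_POVM d t P \<and>
    (\<Sum>i<t. frob_sq (Y i - P i)) \<le> 2 * sqrt (frob_sq N) * (sqrt d + sqrt (frob_sq N))"
proof -
  obtain V \<mu> where V: "unitary_mat d V" and NV: "N = diag_conj d V \<mu>" and \<mu>: "\<And>j. j < d \<Longrightarrow> 0 \<le> \<mu> j"
    using psd_spectral[OF N] by blast
  note V' = unitary_matD[OF V]
  have Yc: "Y i \<in> carrier_mat d d" if "i < t" for i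
    by (rule psd_mat_carrier[OF Y[OF that]])
  define W where "W i = mat_adjoint V * Y i * V" for i
  define \<sigma> where "\<sigma> j = 1 + \<mu> j" for j
  define T where "T = mat_diag d (\<lambda>j. complex_of_real (1 / sqrt (\<sigma> j)))"
  define P where "P i = V * (T * W i * T) * mat_adjoint V" for i
  have Tc: "T \<in> carrier_mat d d" and T_adj: "mat_adjoint T = T"
    unfolding T_def by (simp, rule mat_adjoint_real_diag)
  have Wc: "W i \<in> carrier_mat d d" and W_psd: "psd_mat d (W i)" if "i < t" for i
    unfolding W_def using Yc[OF that] V' psd_mult_conj[OF Y[OF that] V'(2)] by simp_all
  have \<sigma>: "1 \<le> \<sigma> j" if "j < d" for j
    using \<mu>[OF that] unfolding \<sigma>_def by simp
  have W_sum: "tuple_sum d t W = mat_diag d (\<lambda>j. complex_of_real (\<sigma> j))"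
    unfolding W_def \<sigma>_def using Yc V'
    by (simp add: tuple_sum_mult_conj sum NV unitary_conj_one_add_diag_conj[OF V])
  have "tuple_sum d t P = V * tuple_sum d t (\<lambda>i. T * W i * T) * mat_adjoint V"
    unfolding P_def using Wc Tc V' by (intro tuple_sum_mult_conj) auto
  also have "tuple_sum d t (\<lambda>i. T * W i * T) = 1\<^sub>m d"
    unfolding T_def using \<sigma> by (intro diag_scale_tuple_sum[OF Wc W_sum]) force+
  finally have "tuple_sum d t P = 1\<^sub>m d"
    using V' by simp
  moreover have "psd_mat d (P i)" if "i < t" for i
    using psd_mult_conj[OF psd_mult_conj[OF W_psd[OF that] Tc] V'(1)] unfolding P_def T_adj .
  ultimately have "sub_POVM d t P"
    by (intro sub_POVM_of_tuple_sum_one)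
  moreover have "frob_sq (Y i - P i) = frob_sq (W i - T * W i * T)" if "i < t" for i
    using unitary_conj_cancel[OF V Yc[OF that], symmetric] frob_sq_unitary_conj_diff[OF V Wc[OF that]] Tc Wc[OF that]
    unfolding P_def W_def[symmetric] by simp
  moreover have "L2_set (\<lambda>j. \<sigma> j - 1) {..<d} = sqrt (frob_sq N)"
    unfolding \<sigma>_def NV frob_sq_diag_conj[OF V] L2_set_def by simp
  ultimately show ?thesis
    using diag_scale_distance[OF W_psd W_sum \<sigma>] unfolding T_def[symmetric]
    by (intro exI[of _ P]) simp
qed

section \<open>The distance to the nearest sub-POVM\<close>

lemma hermitian_pos_neg_split:
  assumes "hermitian_mat d X"
  shows "\<exists>Y N. psd_mat d Y \<and> psd_mat d N \<and> X = Y - N \<and> frob_sq N = Re (mtrace (mat_fun d zeta X))"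
proof -
  obtain U lam where U: "unitary_mat d U" and XU: "X = diag_conj d U lam"
    and FU: "mat_fun d zeta X = diag_conj d U (\<lambda>j. zeta (lam j))"
    using mat_fun_diag_conj[OF assms] by blast
  have Uc: "U \<in> carrier_mat d d"
    using unitary_matD[OF U] by simp
  define Y where "Y = diag_conj d U (\<lambda>j. max (lam j) 0)"
  define N where "N = diag_conj d U (\<lambda>j. max (- lam j) 0)"
  have "(\<lambda>j. max (lam j) 0 - max (- lam j) 0) = lam"
    by (auto simp: max_def)
  then have "X = Y - N"
    unfolding XU Y_def N_def using diag_conj_diff[OF Uc, of "\<lambda>j. max (lam j) 0" "\<lambda>j. max (- lam j) 0"] by simp
  moreover have "frob_sq N = Re (mtrace (mat_fun d zeta X))"
    unfolding N_def FU frob_sq_diag_conj[OF U] mtrace_diag_conj[OF U]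
    by (auto simp: zeta_def max_def intro!: sum.cong)
  moreover have "psd_mat d Y" "psd_mat d N"
    unfolding Y_def N_def using Uc by (auto intro: psd_diag_conj)
  ultimately show ?thesis
    by blast
qed

lemma hermitian_tuple_pos_neg_split:
  assumes "\<And>i. i < t \<Longrightarrow> hermitian_mat d (X i)"
  shows "\<exists>Y N. \<forall>i<t. psd_mat d (Y i) \<and> psd_mat d (N i) \<and> X i = Y i - N i
    \<and> frob_sq (N i) = Re (mtrace (mat_fun d zeta (X i)))"
proof -
  have "\<forall>i\<in>{..<t}. \<exists>YN. psd_mat d (fst YN) \<and> psd_mat d (snd YN) \<and> X i = fst YN - snd YN
      \<and> frob_sq (snd YN) = Re (mtrace (mat_fun d zeta (X i)))"
    using hermitian_pos_neg_split[OF assms] by fastforce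
  then obtain YN where "\<forall>i\<in>{..<t}. psd_mat d (fst (YN i)) \<and> psd_mat d (snd (YN i))
      \<and> X i = fst (YN i) - snd (YN i) \<and> frob_sq (snd (YN i)) = Re (mtrace (mat_fun d zeta (X i)))"
    by (metis bchoice)
  then show ?thesis
    by (intro exI[of _ "\<lambda>i. fst (YN i)"] exI[of _ "\<lambda>i. snd (YN i)"]) simp
qed

lemma frob_sq_diff_sub_le:
  assumes "(Y::cmat) \<in> carrier_mat d d" "N \<in> carrier_mat d d" "P \<in> carrier_mat d d"
  shows "frob_sq (Y - N - P) \<le> 3/2 * frob_sq (Y - P) + 3 * frob_sq N"
proof -
  have "Y - N - P = (Y - P) - N"
    using assms by (intro eq_matI) auto
  then show ?thesis
    using frob_sq_diff_le[of "Y - P" d d N] assms minus_carrier_mat[OF assms(3)] by simp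
qed

lemma tuple_sum_of_diff:
  assumes sum: "tuple_sum d t X = 1\<^sub>m d" and XYN: "\<And>i. i < t \<Longrightarrow> X i = Y i - N i"
    and N: "\<And>i. i < t \<Longrightarrow> N i \<in> carrier_mat d d"
  shows "tuple_sum d t Y = 1\<^sub>m d + tuple_sum d t N"
proof (rule eq_matI)
  fix j k assume "j < dim_row (1\<^sub>m d + tuple_sum d t N)" "k < dim_col (1\<^sub>m d + tuple_sum d t N)"
  then have jk: "j < d" "k < d" by auto
  have "Y i $$ (j,k) = X i $$ (j,k) + N i $$ (j,k)" if "i < t" for i
    using XYN[OF that] N[OF that] jk by simp
  then have "tuple_sum d t Y $$ (j,k) = tuple_sum d t X $$ (j,k) + tuple_sum d t N $$ (j,k)"
    using jk by (simp add: sum.distrib)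
  then show "tuple_sum d t Y $$ (j,k) = (1\<^sub>m d + tuple_sum d t N) $$ (j,k)"
    unfolding sum using jk by simp
qed auto

lemma sub_POVM_near_hermitian_tuple:
  assumes herm: "\<And>i. i < t \<Longrightarrow> hermitian_mat d (X i)" and sum: "tuple_sum d t X = 1\<^sub>m d"
  defines "s \<equiv> \<Sum>i<t. Re (mtrace (mat_fun d zeta (X i)))"
  shows "\<exists>P. sub_POVM d t P \<and>
    (\<Sum>i<t. frob_sq (X i - P i)) \<le> 3 * sqrt (real t * s) * sqrt d + 3 * (real t * s) + 3 * s"
proof -
  from hermitian_tuple_pos_neg_split[OF herm] obtain Y where "\<exists>N. \<forall>i<t. psd_mat d (Y i) \<and> psd_mat d (N i)
      \<and> X i = Y i - N i \<and> frob_sq (N i) = Re (mtrace (mat_fun d zeta (X i)))" ..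
  then obtain N where "\<forall>i<t. psd_mat d (Y i) \<and> psd_mat d (N i) \<and> X i = Y i - N i
      \<and> frob_sq (N i) = Re (mtrace (mat_fun d zeta (X i)))" ..
  then have Y: "\<And>i. i < t \<Longrightarrow> psd_mat d (Y i)" and N: "\<And>i. i < t \<Longrightarrow> psd_mat d (N i)"
    and XYN: "\<And>i. i < t \<Longrightarrow> X i = Y i - N i"
    and N_zeta: "\<And>i. i < t \<Longrightarrow> frob_sq (N i) = Re (mtrace (mat_fun d zeta (X i)))"
    by simp_all
  have Yc: "Y i \<in> carrier_mat d d" and Nc: "N i \<in> carrier_mat d d" if "i < t" for i
    using psd_mat_carrier Y[OF that] N[OF that] by blast+
  have s: "s = (\<Sum>i<t. frob_sq (N i))"
    unfolding s_def using N_zeta by (intro sum.cong) simp_all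
  have s_nonneg: "0 \<le> s"
    unfolding s by (intro sum_nonneg frob_sq_nonneg)
  have "tuple_sum d t Y = 1\<^sub>m d + tuple_sum d t N"
    by (rule tuple_sum_of_diff[OF sum XYN Nc])
  then obtain P where P: "sub_POVM d t P"
    and YP: "(\<Sum>i<t. frob_sq (Y i - P i))
      \<le> 2 * sqrt (frob_sq (tuple_sum d t N)) * (sqrt d + sqrt (frob_sq (tuple_sum d t N)))"
    using sub_POVM_near_psd_decomposition[of t d Y, OF Y psd_tuple_sum[of t d N, OF N]] by blast
  define \<nu> where "\<nu> = sqrt (frob_sq (tuple_sum d t N))"
  have \<nu>: "\<nu>\<^sup>2 \<le> real t * s" "\<nu> \<le> sqrt (real t * s)"
    using frob_sq_tuple_sum_le[OF Nc] frob_sq_nonneg real_sqrt_le_mono unfolding \<nu>_def s by auto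
  have pointwise: "frob_sq (X i - P i) \<le> 3/2 * frob_sq (Y i - P i) + 3 * frob_sq (N i)" if i: "i < t" for i
    unfolding XYN[OF i]
    by (rule frob_sq_diff_sub_le[OF Yc[OF i] Nc[OF i] psd_mat_carrier]) (use P i in \<open>simp add: sub_POVM_def\<close>)
  have "(\<Sum>i<t. frob_sq (X i - P i)) \<le> (\<Sum>i<t. 3/2 * frob_sq (Y i - P i) + 3 * frob_sq (N i))"
    by (intro sum_mono pointwise) simp
  also have "\<dots> = 3/2 * (\<Sum>i<t. frob_sq (Y i - P i)) + 3 * s"
    unfolding s by (simp add: sum.distrib sum_distrib_left)
  also have "\<dots> \<le> 3/2 * (2 * \<nu> * (sqrt d + \<nu>)) + 3 * s"
    using YP unfolding \<nu>_def by simp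
  also have "\<dots> = 3 * \<nu> * sqrt d + 3 * \<nu>\<^sup>2 + 3 * s"
    by (simp add: algebra_simps power2_eq_square)
  also have "\<dots> \<le> 3 * sqrt (real t * s) * sqrt d + 3 * (real t * s) + 3 * s"
    using \<nu> s_nonneg by (intro add_mono mult_right_mono) auto
  finally show ?thesis
    using P by blast
qed

lemma norm2'_eq_frob_sq:
  assumes "\<And>i. i < t \<Longrightarrow> A i \<in> carrier_mat d d"
  shows "norm2' d t A = (\<Sum>i<t. frob_sq (A i)) / real d"
  unfolding norm2'_def sum_divide_distrib by (intro sum.cong refl) (simp add: frob_sq_eq_trace[OF assms])


lemma norm2'_diff_commute:
  assumes A: "\<And>i. i < t \<Longrightarrow> A i \<in> carrier_mat d d" and B: "\<And>i. i < t \<Longrightarrow> B i \<in> carrier_mat d d"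
  shows "norm2' d t (\<lambda>i. A i - B i) = norm2' d t (\<lambda>i. B i - A i)"
proof -
  have "norm2' d t (\<lambda>i. A i - B i) = (\<Sum>i<t. frob_sq (A i - B i)) / real d"
    by (rule norm2'_eq_frob_sq) (use B in \<open>simp add: minus_carrier_mat\<close>)
  also have "\<dots> = (\<Sum>i<t. frob_sq (B i - A i)) / real d"
    using frob_sq_commute[OF A B] by (intro arg_cong[of _ _ "\<lambda>x. x / real d"] sum.cong) auto
  also have "\<dots> = norm2' d t (\<lambda>i. B i - A i)"
    by (rule norm2'_eq_frob_sq[symmetric]) (use A in \<open>simp add: minus_carrier_mat\<close>)
  finally show ?thesis .
qed

lemma trace_zeta_nonneg: "hermitian_mat d X \<Longrightarrow> 0 \<le> Re (mtrace (mat_fun d zeta X))"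
  using hermitian_pos_neg_split frob_sq_nonneg by metis

lemma distance_bound_div_le:
  fixes d t s :: real
  assumes "0 \<le> d" "0 \<le> t" "0 \<le> s"
  shows "(3 * sqrt (t * s) * sqrt d + 3 * (t * s) + 3 * s) / d \<le> 3 * (t + 1) / d * s + 6 * sqrt (t / d * s)"
proof (cases "d = 0")
  case False
  then have "sqrt (t * s) * sqrt d / d = sqrt (t / d * s)"
    using assms by (simp add: real_sqrt_mult real_sqrt_divide field_simps)
  moreover have "(3 * sqrt (t * s) * sqrt d + 3 * (t * s) + 3 * s) / d
      = 3 * (sqrt (t * s) * sqrt d / d) + 3 * (t + 1) / d * s"
    using False by (simp add: field_simps)
  ultimately show ?thesis
    using assms by simp
qed simp

theorem lemma9p2:
  fixes m n t :: nat and X R :: "nat \<Rightarrow> complex mat"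
  assumes herm: "\<forall>i<t. hermitian_mat (m ^ n) (X i)"
    and sum_id: "tuple_sum (m ^ n) t X = 1\<^sub>m (m ^ n)"
    and R_subPOVM: "sub_POVM (m ^ n) t R"
    and R_argmin: "\<forall>P. sub_POVM (m ^ n) t P \<longrightarrow>
                      norm2' (m ^ n) t (\<lambda>i. X i - R i) \<le> norm2' (m ^ n) t (\<lambda>i. X i - P i)"
  shows "norm2' (m ^ n) t (\<lambda>i. R i - X i)
          \<le> 3 * (real t + 1) / real (m ^ n) * (\<Sum>i<t. Re (mtrace (mat_fun (m ^ n) zeta (X i))))
            + 6 * sqrt (real t / real (m ^ n) * (\<Sum>i<t. Re (mtrace (mat_fun (m ^ n) zeta (X i)))))"
proof -
  define d where "d = m ^ n"
  define s where "s = (\<Sum>i<t. Re (mtrace (mat_fun d zeta (X i))))"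
  have Xc: "X i \<in> carrier_mat d d" if "i < t" for i
    using herm that unfolding d_def hermitian_mat_def by simp
  have carrier_of_sub_POVM: "Q i \<in> carrier_mat d d" if "sub_POVM d t Q" "i < t" for Q i
    using that unfolding sub_POVM_def psd_mat_def hermitian_mat_def by simp
  obtain P where P: "sub_POVM d t P"
    and XP: "(\<Sum>i<t. frob_sq (X i - P i)) \<le> 3 * sqrt (real t * s) * sqrt d + 3 * (real t * s) + 3 * s"
    using sub_POVM_near_hermitian_tuple[of t d X] herm sum_id unfolding d_def s_def by blast
  have "norm2' d t (\<lambda>i. R i - X i) = norm2' d t (\<lambda>i. X i - R i)"
    using Xc carrier_of_sub_POVM[OF R_subPOVM[folded d_def]] by (intro norm2'_diff_commute)
  also have "\<dots> \<le> norm2' d t (\<lambda>i. X i - P i)"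
    using R_argmin P unfolding d_def by blast
  also have "\<dots> \<le> (3 * sqrt (real t * s) * sqrt d + 3 * (real t * s) + 3 * s) / real d"
    using XP Xc carrier_of_sub_POVM[OF P] by (simp add: norm2'_eq_frob_sq minus_carrier_mat divide_right_mono)
  also have "\<dots> \<le> 3 * (real t + 1) / real d * s + 6 * sqrt (real t / real d * s)"
    using herm trace_zeta_nonneg unfolding s_def d_def by (intro distance_bound_div_le sum_nonneg) auto
  finally show ?thesis
    unfolding d_def s_def .
qed

end
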